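(* The complete bipartite graph $K_{3,3}$ is B-factorizable.
   Context: Let $V$ be a finite set with $|V|$ even. $K=\binom{V}{2}$ is the set of 2-element subsets of $V$. An equal partition of $V$ is an unordered pair $\{H,A\}$ of disjoint subsets with $H\cup A=V$ and $|H|=|A|=|V|/2$; $C=C(V)$ is the set of equal partitions. For $c=\{H,A\}\in C$, $B_c$ is the complete bipartite graph with parts $H$ and $A$. Vectors live in $\mathbb N^{K\cup C}$ with $\mathbb N=\{0,1,2,\dots\}$; $v|_K$ denotes the restriction to coordinates in $K$. For $E\subseteq K$, $\chi_E\in\{0,1\}^K$ is its indicator vector. For $E\subseteq K$ and $c\in C$, $\chi_{E,c}\in\mathbb N^{K\cup C}$ has $K$-components $\chi_E$ and $C$-components equal to the indicator of $c$. $PM(V)=\{\chi_{q,c}: c\in C,\ q\text{ a perfect matching of }B_c\}$. For $\mathcal M\subseteq\mathbb N^{K\cup C}$, $\mathbf N(\mathcal M)$ is the set of finite nonnegative integer combinations of elements of $\mathcal M$, and $\overline{\mathbf N}(\mathcal M)=\{v\in\mathbb N^{K\cup C}: kv\in\mathbf N(\mathcal M)\text{ for some integer }k\ge1\}$. A regular graph $G=(V,E)$ is B-factorizable if every $v\in\overline{\mathbf N}(PM(V))$ with $v|_K=\chi_E$ belongs to $\mathbf N(PM(V))$. *)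

theory Defs
  imports Main
begin

text \<open>Coordinates of \<open>\<nat>^(K \<union> C)\<close>: \<open>Inl e\<close> for \<open>e \<in> K\<close>, \<open>Inr c\<close> for \<open>c \<in> C\<close>.\<close>
type_synonym 'a vec = "('a set + 'a set set) \<Rightarrow> nat"

definition Kset :: "'a set \<Rightarrow> 'a set set" where
  "Kset V = {e. e \<subseteq> V \<and> card e = 2}"

definition Cset :: "'a set \<Rightarrow> 'a set set set" where
  "Cset V = {{H, A} | H A. H \<inter> A = {} \<and> H \<union> A = V
                          \<and> card H = card V div 2 \<and> card A = card V div 2}"

definition vecs :: "'a set \<Rightarrow> 'a vec set" where
  "vecs V = {v. \<forall>x. v x \<noteq> 0 \<longrightarrow> x \<in> Inl ` Kset V \<union> Inr ` Cset V}"

definition Bedges :: "'a set set \<Rightarrow> 'a set set" where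
  "Bedges c = {{u, v} | u v. \<exists>X\<in>c. \<exists>Y\<in>c. X \<noteq> Y \<and> u \<in> X \<and> v \<in> Y}"

definition perfect_matching :: "'a set \<Rightarrow> 'a set set \<Rightarrow> 'a set set \<Rightarrow> bool" where
  "perfect_matching V F q \<longleftrightarrow> q \<subseteq> F \<and> (\<forall>x\<in>V. \<exists>!e. e \<in> q \<and> x \<in> e)"

definition chi_EC :: "'a set set \<Rightarrow> 'a set set \<Rightarrow> 'a vec" where
  "chi_EC E c = (\<lambda>x. case x of Inl e \<Rightarrow> (if e \<in> E then 1 else 0)
                              | Inr d \<Rightarrow> (if d = c then 1 else 0))"

definition PM :: "'a set \<Rightarrow> 'a vec set" where
  "PM V = {chi_EC q c | c q. c \<in> Cset V \<and> perfect_matching V (Bedges c) q}"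

inductive_set Ncomb :: "'a vec set \<Rightarrow> 'a vec set" for M where
  zero: "(\<lambda>_. 0) \<in> Ncomb M"
| add: "v \<in> Ncomb M \<Longrightarrow> m \<in> M \<Longrightarrow> (\<lambda>x. v x + m x) \<in> Ncomb M"

definition Nbar :: "'a set \<Rightarrow> 'a vec set \<Rightarrow> 'a vec set" where
  "Nbar V M = {v \<in> vecs V. \<exists>k::nat. k \<ge> 1 \<and> (\<lambda>x. k * v x) \<in> Ncomb M}"

definition regular_graph :: "'a set \<Rightarrow> 'a set set \<Rightarrow> bool" where
  "regular_graph V E \<longleftrightarrow> finite V \<and> E \<subseteq> Kset V \<and>
     (\<exists>d. \<forall>x\<in>V. card {e \<in> E. x \<in> e} = d)"

definition B_factorizable :: "'a set \<Rightarrow> 'a set set \<Rightarrow> bool" where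
  "B_factorizable V E \<longleftrightarrow> regular_graph V E \<and>
     (\<forall>v \<in> Nbar V (PM V).
        (\<forall>e \<in> Kset V. v (Inl e) = (if e \<in> E then 1 else 0)) \<longrightarrow> v \<in> Ncomb (PM V))"

end

theory Submission
  imports Defs
begin

text \<open>
  Let \<open>v \<in> \<nat>^(K \<union> C)\<close> with \<open>v|_K = \<chi>_E\<close> for \<open>E\<close> the edges of \<open>K_{3,3}\<close> on \<open>H \<union> A\<close>,
  and suppose \<open>k \<cdot> v\<close> is a sum of vectors \<open>\<chi>_{q,c}\<close> from \<open>PM(V)\<close>, recorded as a list \<open>ps\<close>
  of pairs \<open>(q, c)\<close>.  Every edge is used exactly \<open>k\<close> times, so every \<open>q\<close> is one of the six
  perfect matchings of \<open>K_{3,3}\<close>.  These form two 1-factorizations \<open>{P1,P2,P3}\<close> and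
  \<open>{Q1,Q2,Q3}\<close>, and counting the uses of five edges shows that all of \<open>P1,P2,P3\<close> or all of
  \<open>Q1,Q2,Q3\<close> occur in \<open>ps\<close>; let \<open>qs\<close> be three such pairs.  Every equal partition
  \<open>d \<noteq> {H, A}\<close> forces an edge: it lies in every perfect matching of \<open>K_{3,3}\<close> inside \<open>B_d\<close>.
  Hence label \<open>d\<close> occurs at most \<open>k\<close> times, \<open>v(d) \<le> 1\<close>, and when \<open>v(d) = 1\<close> the pairs
  labelled \<open>d\<close> are exactly those containing its forced edge.  So \<open>v\<close> agrees with the sum of
  \<open>qs\<close> at every coordinate except \<open>{H, A}\<close>, and comparing the total label mass (\<open>3\<close> on both
  sides) settles that one too; thus \<open>v\<close> is the sum of \<open>qs\<close> and lies in \<open>N(PM(V))\<close>.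
\<close>

section \<open>Counting in lists\<close>

lemma length_filter_mono:
  assumes "\<forall>x\<in>set xs. P x \<longrightarrow> Q x"
  shows "length (filter P xs) \<le> length (filter Q xs)"
  using assms by (induction xs) auto

lemma filter_length_eq_imp:
  assumes "\<forall>x\<in>set xs. P x \<longrightarrow> Q x" and "length (filter P xs) = length (filter Q xs)"
  shows "\<forall>x\<in>set xs. Q x \<longrightarrow> P x"
  using assms
proof (induction xs)
  case (Cons a xs)
  have imp: "\<forall>x\<in>set xs. P x \<longrightarrow> Q x"
    using Cons.prems(1) by simp
  have le: "length (filter P xs) \<le> length (filter Q xs)"
    using imp by (rule length_filter_mono)
  have pq: "P a \<longrightarrow> Q a"
    using Cons.prems(1) by simp
  have "(P a \<longleftrightarrow> Q a) \<and> length (filter P xs) = length (filter Q xs)"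
  proof (cases "P a")
    case True
    then show ?thesis using Cons.prems(2) pq by simp
  next
    case False
    then show ?thesis using Cons.prems(2) le by (cases "Q a") simp_all
  qed
  then have "Q a \<longrightarrow> P a" "\<forall>x\<in>set xs. Q x \<longrightarrow> P x"
    using Cons.IH[OF imp] by blast+
  then show ?case by simp
qed simp

lemma length_by_unique_class:
  assumes "finite S" and "\<forall>x\<in>set xs. \<exists>!s. s \<in> S \<and> R s x"
  shows "length xs = (\<Sum>s\<in>S. length (filter (R s) xs))"
  using assms(2)
proof (induction xs)
  case (Cons x xs)
  have "\<exists>!s. s \<in> S \<and> R s x" using Cons.prems by simp
  then obtain s where s: "s \<in> S" "R s x" and u: "\<And>t. t \<in> S \<Longrightarrow> R t x \<Longrightarrow> t = s"
    by blast
  have "(\<Sum>t\<in>S. length (filter (R t) (x # xs)))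
      = (\<Sum>t\<in>S. (if t = s then 1 else 0) + length (filter (R t) xs))"
    by (rule sum.cong) (use s in \<open>auto dest: u\<close>)
  also have "\<dots> = 1 + length xs"
    using Cons.IH Cons.prems s assms(1) by (simp add: sum.distrib)
  finally show ?case by simp
qed simp

section \<open>Integer combinations of matching vectors as lists\<close>

definition sumv :: "('a set set \<times> 'a set set) list \<Rightarrow> 'a vec" where
  "sumv ps = (\<lambda>x. \<Sum>p\<leftarrow>ps. chi_EC (fst p) (snd p) x)"

definition valid :: "'a set \<Rightarrow> 'a set set \<times> 'a set set \<Rightarrow> bool" where
  "valid V p \<longleftrightarrow> snd p \<in> Cset V \<and> perfect_matching V (Bedges (snd p)) (fst p)"

lemma sumv_Nil [simp]: "sumv [] = (\<lambda>_. 0)"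
  by (simp add: sumv_def)

lemma sumv_Cons [simp]: "sumv (p # ps) x = chi_EC (fst p) (snd p) x + sumv ps x"
  by (simp add: sumv_def)

lemma sumv_snoc: "sumv (ps @ [p]) = (\<lambda>x. sumv ps x + chi_EC (fst p) (snd p) x)"
  by (simp add: sumv_def)

lemma Ncomb_PM_iff:
  "w \<in> Ncomb (PM V) \<longleftrightarrow> (\<exists>ps. (\<forall>p\<in>set ps. valid V p) \<and> w = sumv ps)"
proof
  assume "w \<in> Ncomb (PM V)"
  then show "\<exists>ps. (\<forall>p\<in>set ps. valid V p) \<and> w = sumv ps"
  proof (induction rule: Ncomb.induct)
    case zero
    show ?case by (intro exI[of _ "[]"]) simp
  next
    case (add v m)
    then obtain ps where "\<forall>p\<in>set ps. valid V p" "v = sumv ps" by blast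
    moreover obtain c q where "m = chi_EC q c" "c \<in> Cset V" "perfect_matching V (Bedges c) q"
      using add.hyps(2) unfolding PM_def by blast
    ultimately show ?case
      by (intro exI[of _ "ps @ [(q, c)]"]) (simp add: valid_def sumv_snoc)
  qed
next
  assume "\<exists>ps. (\<forall>p\<in>set ps. valid V p) \<and> w = sumv ps"
  then obtain ps where ps: "\<forall>p\<in>set ps. valid V p" and w: "w = sumv ps" by blast
  from ps have "sumv ps \<in> Ncomb (PM V)"
  proof (induction ps rule: rev_induct)
    case Nil
    show ?case by (simp add: Ncomb.zero)
  next
    case (snoc p ps)
    have "chi_EC (fst p) (snd p) \<in> PM V"
      using snoc.prems unfolding valid_def PM_def by auto
    with snoc show ?case by (simp add: sumv_snoc Ncomb.add)
  qed
  with w show "w \<in> Ncomb (PM V)" by simp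
qed

lemma sum_list_indicator:
  "(\<Sum>p\<leftarrow>ps. if P p then 1 else 0) = (length (filter P ps) :: nat)"
  by (induction ps) auto

lemma sumv_Inl: "sumv ps (Inl e) = length (filter (\<lambda>p. e \<in> fst p) ps)"
  unfolding sumv_def chi_EC_def by (simp add: sum_list_indicator)

lemma sumv_Inr: "sumv ps (Inr d) = length (filter (\<lambda>p. snd p = d) ps)"
  unfolding sumv_def chi_EC_def by (simp add: sum_list_indicator eq_commute)

lemma sumv_Inl_zero: "sumv ps (Inl e) = 0 \<Longrightarrow> p \<in> set ps \<Longrightarrow> e \<notin> fst p"
  unfolding sumv_Inl by (auto simp: filter_empty_conv)

text \<open>Every pair carries one label, so the label coordinates add up to the length.\<close>

lemma sumv_Inr_total:
  assumes "finite L" and "\<forall>p\<in>set ps. snd p \<in> L"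
  shows "(\<Sum>d\<in>L. sumv ps (Inr d)) = length ps"
proof -
  have "\<forall>p\<in>set ps. \<exists>!d. d \<in> L \<and> snd p = d" using assms(2) by auto
  then show ?thesis
    using length_by_unique_class[OF assms(1), of ps "\<lambda>d p. snd p = d"] by (simp add: sumv_Inr)
qed

lemma sumv_Inr_eq_Inl:
  assumes "\<forall>p\<in>set qs. snd p = d \<longleftrightarrow> e \<in> fst p"
  shows "sumv qs (Inr d) = sumv qs (Inl e)"
  unfolding sumv_Inr sumv_Inl using assms by (metis (mono_tags, lifting) filter_cong)

lemma sumv_Inr_sublist_zero:
  assumes "sumv ps (Inr d) = 0" and "set qs \<subseteq> set ps"
  shows "sumv qs (Inr d) = 0"
  using assms unfolding sumv_Inr by (auto simp: filter_empty_conv)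

definition mcount :: "('a set set \<times> 'a set set) list \<Rightarrow> 'a set set \<Rightarrow> nat" where
  "mcount ps q = length (filter (\<lambda>p. fst p = q) ps)"

lemma mcount_pos_ex: "0 < mcount ps q \<Longrightarrow> \<exists>p\<in>set ps. fst p = q"
  unfolding mcount_def by (auto simp: filter_empty_conv)

lemma sumv_Inl_two_matchings:
  assumes "\<forall>p\<in>set ps. e \<in> fst p \<longleftrightarrow> fst p = X \<or> fst p = Y" and "X \<noteq> Y"
  shows "sumv ps (Inl e) = mcount ps X + mcount ps Y"
proof -
  have "filter (\<lambda>p. e \<in> fst p) ps = filter (\<lambda>p. fst p = X \<or> fst p = Y) ps"
    by (rule filter_cong[OF refl]) (use assms(1) in blast)
  moreover have "length (filter (\<lambda>p. fst p = X \<or> fst p = Y) qs)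
      = length (filter (\<lambda>p. fst p = X) qs) + length (filter (\<lambda>p. fst p = Y) qs)" for qs
    using assms(2) by (induction qs) auto
  ultimately show ?thesis unfolding sumv_Inl mcount_def by simp
qed

lemma pairs_with_matchings:
  assumes "0 < mcount ps M1" and "0 < mcount ps M2" and "0 < mcount ps M3"
  obtains qs where "set qs \<subseteq> set ps" and "length qs = 3"
    and "\<And>e. sumv qs (Inl e) = (if e \<in> M1 then 1 else 0) + (if e \<in> M2 then 1 else 0)
                             + (if e \<in> M3 then 1 else 0)"
proof -
  obtain p1 p2 p3 where "p1 \<in> set ps" "fst p1 = M1" "p2 \<in> set ps" "fst p2 = M2"
      "p3 \<in> set ps" "fst p3 = M3"
    using mcount_pos_ex[OF assms(1)] mcount_pos_ex[OF assms(2)] mcount_pos_ex[OF assms(3)] by blast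
  then show thesis
    by (intro that[of "[p1, p2, p3]"]) (simp_all add: chi_EC_def)
qed

section \<open>The decomposition lemma\<close>

text \<open>A label \<open>d\<close> all of whose pairs contain an edge \<open>e\<close> with \<open>v(e) = 1\<close> gets value at most 1
  under \<open>v\<close>, and then it is carried by exactly the pairs containing \<open>e\<close>; so \<open>v\<close> agrees at \<open>d\<close>
  with any sublist using \<open>e\<close> once.\<close>

lemma forced_label_value:
  assumes k: "k \<ge> 1"
    and kv: "\<And>x. k * v x = sumv ps x"
    and ve: "v (Inl e) = 1"
    and forced: "\<forall>p\<in>set ps. snd p = d \<longrightarrow> e \<in> fst p"
    and sub: "set qs \<subseteq> set ps"
    and qe: "sumv qs (Inl e) = 1"
  shows "v (Inr d) = sumv qs (Inr d)"
proof -
  have "k * v (Inr d) \<le> k * v (Inl e)"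
    unfolding kv sumv_Inr sumv_Inl using forced by (rule length_filter_mono)
  then have le1: "v (Inr d) \<le> 1" using k ve by simp
  show ?thesis
  proof (cases "v (Inr d) = 0")
    case True
    then have "sumv ps (Inr d) = 0" using kv[of "Inr d"] by simp
    then show ?thesis using True sumv_Inr_sublist_zero[OF _ sub] by simp
  next
    case False
    then have v1: "v (Inr d) = 1" using le1 by simp
    have "length (filter (\<lambda>p. snd p = d) ps) = length (filter (\<lambda>p. e \<in> fst p) ps)"
      using kv[of "Inr d"] kv[of "Inl e"] ve v1 by (simp add: sumv_Inr sumv_Inl)
    then have "\<forall>p\<in>set ps. e \<in> fst p \<longrightarrow> snd p = d"
      using forced by (rule filter_length_eq_imp[rotated])
    with forced sub have "\<forall>p\<in>set qs. snd p = d \<longleftrightarrow> e \<in> fst p" by blast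
    then have "sumv qs (Inr d) = sumv qs (Inl e)" by (rule sumv_Inr_eq_Inl)
    then show ?thesis using v1 qe by simp
  qed
qed

lemma decomposition_by_factor_list:
  assumes k: "k \<ge> 1"
    and kv: "\<And>x. k * v x = sumv ps x"
    and v_edges: "\<And>e. v (Inl e) = (if e \<in> E then 1 else 0)"
    and fin: "finite L" and labels: "\<forall>p\<in>set ps. snd p \<in> L" and c0: "c0 \<in> L"
    and forced: "\<And>d. d \<in> L \<Longrightarrow> d \<noteq> c0 \<Longrightarrow> \<exists>e\<in>E. \<forall>p\<in>set ps. snd p = d \<longrightarrow> e \<in> fst p"
    and sub: "set qs \<subseteq> set ps"
    and factor: "\<And>e. sumv qs (Inl e) = (if e \<in> E then 1 else 0)"
    and len: "length ps = k * length qs"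
  shows "v = sumv qs"
proof -
  have other: "v (Inr d) = sumv qs (Inr d)" if ne: "d \<noteq> c0" for d
  proof (cases "d \<in> L")
    case True
    then obtain e where e: "e \<in> E" and forced_e: "\<forall>p\<in>set ps. snd p = d \<longrightarrow> e \<in> fst p"
      using forced[OF True ne] by blast
    have "v (Inl e) = 1" "sumv qs (Inl e) = 1" using e v_edges factor by simp_all
    then show ?thesis using forced_label_value[OF k kv _ forced_e sub] by simp
  next
    case False
    then have "sumv ps (Inr d) = 0"
      using labels unfolding sumv_Inr by (auto simp: filter_empty_conv)
    then show ?thesis
      using kv[of "Inr d"] k sumv_Inr_sublist_zero[OF _ sub] by simp
  qed
  have "k * (\<Sum>d\<in>L. v (Inr d)) = k * length qs"
    using sumv_Inr_total[OF fin labels] len by (simp add: sum_distrib_left kv)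
  then have total_v: "(\<Sum>d\<in>L. v (Inr d)) = length qs" using k by simp
  have total_qs: "(\<Sum>d\<in>L. sumv qs (Inr d)) = length qs"
    using sub labels by (intro sumv_Inr_total[OF fin]) blast
  have "(\<Sum>d\<in>L - {c0}. v (Inr d)) = (\<Sum>d\<in>L - {c0}. sumv qs (Inr d))"
    using other by (intro sum.cong) auto
  then have at_c0: "v (Inr c0) = sumv qs (Inr c0)"
    using total_v total_qs sum.remove[OF fin c0, of "\<lambda>d. v (Inr d)"]
      sum.remove[OF fin c0, of "\<lambda>d. sumv qs (Inr d)"] by simp
  show ?thesis
  proof
    fix x show "v x = sumv qs x"
    proof (cases x)
      case (Inl e)
      then show ?thesis using v_edges[of e] factor[of e] by simp
    next
      case (Inr d)
      then show ?thesis using other[of d] at_c0 by (cases "d = c0") simp_all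
    qed
  qed
qed

lemma edge_coordinates:
  assumes "v \<in> vecs V" and "E \<subseteq> Kset V"
    and "\<forall>e\<in>Kset V. v (Inl e) = (if e \<in> E then 1 else 0)"
  shows "v (Inl e) = (if e \<in> E then 1 else 0)"
proof (cases "e \<in> Kset V")
  case False
  then have "v (Inl e) = 0" using assms(1) unfolding vecs_def by blast
  moreover have "e \<notin> E" using False assms(2) by blast
  ultimately show ?thesis by simp
qed (use assms(3) in simp)

lemma finite_Cset: "finite V \<Longrightarrow> finite (Cset V)"
  by (rule finite_subset[of _ "Pow (Pow V)"]) (auto simp: Cset_def)

section \<open>Complete bipartite graphs\<close>

definition bip_edges :: "'a set \<Rightarrow> 'a set \<Rightarrow> 'a set set" where
  "bip_edges H A = {{u, v} | u v. u \<in> H \<and> v \<in> A}"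

lemma bip_edge_at:
  assumes "H \<inter> A = {}" and "e \<in> bip_edges H A" and "h \<in> H" and "h \<in> e"
  obtains a where "a \<in> A" and "e = {h, a}"
  using assms unfolding bip_edges_def by blast

lemma bip_edges_in_Kset: "H \<inter> A = {} \<Longrightarrow> bip_edges H A \<subseteq> Kset (H \<union> A)"
  unfolding bip_edges_def Kset_def by (fastforce simp: card_2_iff)

lemma bip_edges_commute: "bip_edges H A = bip_edges A H"
  unfolding bip_edges_def by (auto simp: insert_commute)

lemma bip_star:
  assumes "H \<inter> A = {}" and "h \<in> H"
  shows "card {e \<in> bip_edges H A. h \<in> e} = card A"
proof -
  have "{e \<in> bip_edges H A. h \<in> e} = (\<lambda>a. {h, a}) ` A"
    using assms unfolding bip_edges_def by (auto simp: doubleton_eq_iff)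
  moreover have "inj_on (\<lambda>a. {h, a}) A"
    using assms by (auto intro!: inj_onI simp: doubleton_eq_iff)
  ultimately show ?thesis by (simp add: card_image)
qed

lemma regular_bip:
  assumes "finite H" and "finite A" and "H \<inter> A = {}" and "card H = card A"
  shows "regular_graph (H \<union> A) (bip_edges H A)"
  unfolding regular_graph_def
proof (intro conjI)
  show "finite (H \<union> A)" using assms by simp
  show "bip_edges H A \<subseteq> Kset (H \<union> A)"
    using assms(3) by (rule bip_edges_in_Kset)
  have "card {e \<in> bip_edges H A. x \<in> e} = card A" if "x \<in> H \<union> A" for x
    using that bip_star[OF assms(3)] bip_star[of A H] assms(3,4) bip_edges_commute[of H A]
    by (auto simp: Int_commute)
  then show "\<exists>d. \<forall>x\<in>H \<union> A. card {e \<in> bip_edges H A. x \<in> e} = d" by blast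
qed

lemma Bedges_crossing:
  assumes "X \<inter> Y = {}" and "{u, w} \<in> Bedges {X, Y}" and "u \<in> X"
  shows "w \<in> Y"
  using assms unfolding Bedges_def by (auto simp: doubleton_eq_iff)

lemma forced_partner:
  assumes "H \<inter> A = {}" and "X \<inter> Y = {}"
    and "q \<subseteq> bip_edges H A" and "q \<subseteq> Bedges {X, Y}"
    and "H \<inter> X = {h}" and "A \<inter> Y = {a}"
    and "e \<in> q" and "h \<in> e"
  shows "e = {h, a}"
proof -
  obtain b where b: "b \<in> A" "e = {h, b}"
    using bip_edge_at[of H A e h] assms by blast
  have "b \<in> Y" using Bedges_crossing[of X Y h b] assms b by blast
  with b(1) assms(6) have "b = a" by blast
  with b(2) show ?thesis by simp
qed

lemma card_split:
  assumes "S \<inter> T = {}" and "U \<subseteq> S \<union> T" and "finite U"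
  shows "card (U \<inter> S) + card (U \<inter> T) = card U"
proof -
  have "U = (U \<inter> S) \<union> (U \<inter> T)" using assms(2) by blast
  moreover have "(U \<inter> S) \<inter> (U \<inter> T) = {}" using assms(1) by blast
  ultimately show ?thesis using assms(3) by (metis card_Un_disjoint finite_Int)
qed

lemma equal_partition_of_K33:
  assumes H: "card H = 3" and A: "card A = 3" and HA: "H \<inter> A = {}"
    and d: "d \<in> Cset (H \<union> A)" and ne: "d \<noteq> {H, A}"
  obtains X Y h a where "d = {X, Y}" and "X \<inter> Y = {}" and "H \<inter> X = {h}" and "A \<inter> Y = {a}"
proof -
  have fin: "finite H" "finite A" using H A by (simp_all add: card_ge_0_finite)
  have "card (H \<union> A) = 6" using H A HA fin by (simp add: card_Un_disjoint)
  then obtain X Y where d_XY: "d = {X, Y}" and XY: "X \<inter> Y = {}" "X \<union> Y = H \<union> A"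
    and cX: "card X = 3" and cY: "card Y = 3"
    using d unfolding Cset_def by auto
  have trivial: "{S, T} = {H, A}"
    if "card (H \<inter> S) = 0" "S \<union> T = H \<union> A" "S \<inter> T = {}" "card S = 3" "card T = 3" for S T
  proof -
    have "H \<inter> S = {}" using that(1,4) fin by (simp add: card_ge_0_finite)
    then have "S \<subseteq> A" using that(2) by blast
    then have S: "S = A" using that(4) A fin by (simp add: card_subset_eq)
    then have "T \<subseteq> H" using that(2,3) by blast
    then have "T = H" using that(5) H fin by (simp add: card_subset_eq)
    with S show ?thesis by blast
  qed
  have cH: "card (H \<inter> X) + card (H \<inter> Y) = 3" and cA: "card (A \<inter> X) + card (A \<inter> Y) = 3"
    using card_split[OF XY(1)] XY(2) H A fin by auto
  have cXs: "card (X \<inter> H) + card (X \<inter> A) = 3"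
  proof -
    have "X \<subseteq> H \<union> A" using XY(2) by blast
    then show ?thesis using card_split[OF HA, of X] cX by (simp add: card_ge_0_finite)
  qed
  have "card (H \<inter> X) \<le> 3" using H fin by (metis card_mono inf_le1)
  then consider "card (H \<inter> X) = 0" | "card (H \<inter> X) = 1" | "card (H \<inter> X) = 2"
    | "card (H \<inter> X) = 3" by linarith
  then show thesis
  proof cases
    case 1
    then have "d = {H, A}" using trivial[of X Y] XY cX cY d_XY by simp
    with ne show ?thesis by simp
  next
    case 2
    then have "card (A \<inter> Y) = 1" using cA cXs by (simp add: Int_commute)
    moreover have "card (H \<inter> X) = 1" using 2 .
    ultimately obtain h a where "H \<inter> X = {h}" "A \<inter> Y = {a}" by (auto simp: card_1_singleton_iff)
    then show ?thesis using that d_XY XY(1) by blast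
  next
    case 3
    then have "card (H \<inter> Y) = 1" "card (A \<inter> X) = 1" using cH cXs by (simp_all add: Int_commute)
    then obtain h a where "H \<inter> Y = {h}" "A \<inter> X = {a}" by (auto simp: card_1_singleton_iff)
    moreover have "d = {Y, X}" "Y \<inter> X = {}" using d_XY XY(1) by auto
    ultimately show ?thesis using that by blast
  next
    case 4
    then have "{Y, X} = {H, A}" using trivial[of Y X] cH XY cX cY by (simp add: Un_commute Int_commute)
    with ne d_XY show ?thesis by (simp add: insert_commute)
  qed
qed

lemma K33_forced_edge:
  assumes "card H = 3" and "card A = 3" and HA: "H \<inter> A = {}"
    and "d \<in> Cset (H \<union> A)" and "d \<noteq> {H, A}"
  obtains e where "e \<in> bip_edges H A"
    and "\<And>q. perfect_matching (H \<union> A) (Bedges d) q \<Longrightarrow> q \<subseteq> bip_edges H A \<Longrightarrow> e \<in> q"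
proof -
  obtain X Y h a where d: "d = {X, Y}" and XY: "X \<inter> Y = {}" and h: "H \<inter> X = {h}" and a: "A \<inter> Y = {a}"
    by (rule equal_partition_of_K33[OF assms])
  show thesis
  proof (rule that)
    show "{h, a} \<in> bip_edges H A" using h a unfolding bip_edges_def by blast
  next
    fix q assume pm: "perfect_matching (H \<union> A) (Bedges d) q" and bip: "q \<subseteq> bip_edges H A"
    have "h \<in> H \<union> A" using h by blast
    then have "\<exists>!e. e \<in> q \<and> h \<in> e" using pm unfolding perfect_matching_def by simp
    then obtain e where e: "e \<in> q" "h \<in> e" by blast
    have "q \<subseteq> Bedges {X, Y}" using pm d unfolding perfect_matching_def by simp
    with e have "e = {h, a}" using forced_partner[OF HA XY bip _ h a] by blast
    with e show "{h, a} \<in> q" by simp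
  qed
qed

section \<open>The perfect matchings of \<open>K_{3,3}\<close>\<close>

locale K33 =
  fixes h1 h2 h3 a1 a2 a3 :: 'a
  assumes distinct: "distinct [h1, h2, h3, a1, a2, a3]"
begin

abbreviation "HH \<equiv> {h1, h2, h3}"
abbreviation "AA \<equiv> {a1, a2, a3}"
abbreviation "EE \<equiv> bip_edges HH AA"

definition match :: "'a \<Rightarrow> 'a \<Rightarrow> 'a \<Rightarrow> 'a set set" where
  "match b1 b2 b3 = {{h1, b1}, {h2, b2}, {h3, b3}}"

lemma HA_disjoint: "HH \<inter> AA = {}"
  using distinct by auto

lemma H_not_in_A: "h1 \<notin> AA" "h2 \<notin> AA" "h3 \<notin> AA"
  and H_distinct: "h1 \<noteq> h2" "h1 \<noteq> h3" "h2 \<noteq> h3"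
  and A_distinct: "a1 \<noteq> a2" "a1 \<noteq> a3" "a2 \<noteq> a3"
  using distinct by auto

lemma mem_match:
  assumes "b1 \<in> AA" "b2 \<in> AA" "b3 \<in> AA" "a \<in> AA"
  shows "{h1, a} \<in> match b1 b2 b3 \<longleftrightarrow> a = b1"
    and "{h2, a} \<in> match b1 b2 b3 \<longleftrightarrow> a = b2"
    and "{h3, a} \<in> match b1 b2 b3 \<longleftrightarrow> a = b3"
proof -
  have ne: "x \<noteq> h1" "x \<noteq> h2" "x \<noteq> h3" if "x \<in> AA" for x
    using that H_not_in_A by blast+
  show "{h1, a} \<in> match b1 b2 b3 \<longleftrightarrow> a = b1" "{h2, a} \<in> match b1 b2 b3 \<longleftrightarrow> a = b2"
    "{h3, a} \<in> match b1 b2 b3 \<longleftrightarrow> a = b3"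
    using ne[OF assms(1)] ne[OF assms(2)] ne[OF assms(3)] ne[OF assms(4)] H_distinct
    unfolding match_def by (auto simp: doubleton_eq_iff)
qed

lemma match_eq_iff:
  assumes "b1 \<in> AA" "b2 \<in> AA" "b3 \<in> AA" "c1 \<in> AA" "c2 \<in> AA" "c3 \<in> AA"
  shows "match b1 b2 b3 = match c1 c2 c3 \<longleftrightarrow> b1 = c1 \<and> b2 = c2 \<and> b3 = c3"
proof
  assume eq: "match b1 b2 b3 = match c1 c2 c3"
  have "{h1, b1} \<in> match b1 b2 b3" "{h2, b2} \<in> match b1 b2 b3" "{h3, b3} \<in> match b1 b2 b3"
    unfolding match_def by simp_all
  then have "{h1, b1} \<in> match c1 c2 c3" "{h2, b2} \<in> match c1 c2 c3" "{h3, b3} \<in> match c1 c2 c3"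
    unfolding eq by simp_all
  then show "b1 = c1 \<and> b2 = c2 \<and> b3 = c3" using mem_match[of c1 c2 c3] assms by simp
qed simp

lemma match_subset_EE: "b1 \<in> AA \<Longrightarrow> b2 \<in> AA \<Longrightarrow> b3 \<in> AA \<Longrightarrow> match b1 b2 b3 \<subseteq> EE"
  unfolding match_def bip_edges_def by blast

definition permutation_matching :: "'a set set \<Rightarrow> bool" where
  "permutation_matching q \<longleftrightarrow>
     (\<exists>b1 b2 b3. b1 \<in> AA \<and> b2 \<in> AA \<and> b3 \<in> AA \<and> distinct [b1, b2, b3] \<and> q = match b1 b2 b3)"

lemma perfect_matching_is_permutation:
  assumes bip: "q \<subseteq> EE" and "perfect_matching (HH \<union> AA) F q"
  shows "permutation_matching q"
proof -
  have pm: "\<forall>x\<in>HH \<union> AA. \<exists>!e. e \<in> q \<and> x \<in> e"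
    using assms(2) unfolding perfect_matching_def by (rule conjunct2)
  have edge_unique: "e = e'" if "x \<in> HH \<union> AA" "e \<in> q" "e' \<in> q" "x \<in> e" "x \<in> e'" for x e e'
  proof -
    have "\<exists>!e. e \<in> q \<and> x \<in> e" using pm that(1) by (rule bspec)
    then show ?thesis using that(2-5) by (metis (no_types))
  qed
  have partner: "\<exists>a\<in>AA. {h, a} \<in> q" if "h \<in> HH" for h
  proof -
    have "\<exists>!e. e \<in> q \<and> h \<in> e" using pm that by (intro bspec[OF pm]) blast
    then obtain e where "e \<in> q" "h \<in> e" by blast
    then show ?thesis using bip_edge_at[OF HA_disjoint _ that] bip by blast
  qed
  obtain b1 b2 b3 where b: "b1 \<in> AA" "{h1, b1} \<in> q" "b2 \<in> AA" "{h2, b2} \<in> q" "b3 \<in> AA" "{h3, b3} \<in> q"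
    using partner[of h1] partner[of h2] partner[of h3] by auto
  have "b1 \<noteq> b2" "b1 \<noteq> b3" "b2 \<noteq> b3"
    using edge_unique[of b1 "{h1, b1}" "{h2, b2}"] edge_unique[of b1 "{h1, b1}" "{h3, b3}"]
      edge_unique[of b2 "{h2, b2}" "{h3, b3}"] b H_distinct H_not_in_A
    by (auto simp: doubleton_eq_iff)
  moreover have "q = match b1 b2 b3"
  proof
    show "match b1 b2 b3 \<subseteq> q" using b unfolding match_def by simp
  next
    show "q \<subseteq> match b1 b2 b3"
    proof
      fix e assume e: "e \<in> q"
      then obtain h a where h: "h \<in> HH" and a: "a \<in> AA" and e_ha: "e = {h, a}"
        using bip unfolding bip_edges_def by blast
      have same_partner: "a = b" if "{h, b} \<in> q" for b
      proof -
        have "{h, a} = {h, b}" using edge_unique[of h "{h, a}" "{h, b}"] h that e e_ha by simp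
        then show ?thesis by (auto simp: doubleton_eq_iff)
      qed
      consider "h = h1" | "h = h2" | "h = h3" using h by blast
      then show "e \<in> match b1 b2 b3"
        by cases (use same_partner[of b1] same_partner[of b2] same_partner[of b3] b e_ha
            in \<open>simp_all add: match_def\<close>)
    qed
  qed
  ultimately show ?thesis unfolding permutation_matching_def using b
    by (intro exI[of _ b1] exI[of _ b2] exI[of _ b3]) simp
qed

text \<open>The even and the odd permutations of \<open>AA\<close> give the two 1-factorizations of \<open>K_{3,3}\<close>.\<close>

abbreviation "P1 \<equiv> match a1 a2 a3"
abbreviation "P2 \<equiv> match a2 a3 a1"
abbreviation "P3 \<equiv> match a3 a1 a2"
abbreviation "Q1 \<equiv> match a1 a3 a2"
abbreviation "Q2 \<equiv> match a2 a1 a3"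
abbreviation "Q3 \<equiv> match a3 a2 a1"

lemma one_factorizations:
  "(if e \<in> P1 then 1 else 0) + (if e \<in> P2 then 1 else 0) + (if e \<in> P3 then 1 else 0)
     = (if e \<in> EE then 1 else 0 :: nat)" (is ?P)
  "(if e \<in> Q1 then 1 else 0) + (if e \<in> Q2 then 1 else 0) + (if e \<in> Q3 then 1 else 0)
     = (if e \<in> EE then 1 else 0 :: nat)" (is ?Q)
proof -
  have "?P \<and> ?Q"
  proof (cases "e \<in> EE")
    case True
    then obtain h a where "h = h1 \<or> h = h2 \<or> h = h3" "a = a1 \<or> a = a2 \<or> a = a3" "e = {h, a}"
      unfolding bip_edges_def by blast
    then show ?thesis using True A_distinct by (elim disjE) (simp_all add: mem_match)
  qed (use match_subset_EE in auto)
  then show ?P ?Q by simp_all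
qed

lemma edge_classes:
  assumes "permutation_matching q"
  shows "{h1, a1} \<in> q \<longleftrightarrow> q = P1 \<or> q = Q1"
    and "{h1, a2} \<in> q \<longleftrightarrow> q = P2 \<or> q = Q2"
    and "{h1, a3} \<in> q \<longleftrightarrow> q = P3 \<or> q = Q3"
    and "{h2, a3} \<in> q \<longleftrightarrow> q = P2 \<or> q = Q1"
    and "{h3, a2} \<in> q \<longleftrightarrow> q = P3 \<or> q = Q1"
proof -
  obtain b1 b2 b3 where b: "b1 \<in> AA" "b2 \<in> AA" "b3 \<in> AA" "distinct [b1, b2, b3]"
    and q: "q = match b1 b2 b3"
    using assms unfolding permutation_matching_def by blast
  show "{h1, a1} \<in> q \<longleftrightarrow> q = P1 \<or> q = Q1" "{h1, a2} \<in> q \<longleftrightarrow> q = P2 \<or> q = Q2"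
    "{h1, a3} \<in> q \<longleftrightarrow> q = P3 \<or> q = Q3" "{h2, a3} \<in> q \<longleftrightarrow> q = P2 \<or> q = Q1"
    "{h3, a2} \<in> q \<longleftrightarrow> q = P3 \<or> q = Q1"
    using b A_distinct unfolding q by (simp_all add: mem_match match_eq_iff) (elim disjE; simp; blast)+
qed

lemma matchings_differ: "P1 \<noteq> Q1" "P2 \<noteq> Q2" "P3 \<noteq> Q3" "P2 \<noteq> Q1" "P3 \<noteq> Q1"
  using A_distinct by (simp_all add: match_eq_iff)

text \<open>Each matching uses exactly one edge at \<open>h1\<close>; so if every edge is used \<open>k\<close> times, there are
  \<open>3k\<close> pairs.\<close>

lemma length_from_h1_edges:
  assumes shape: "\<forall>p\<in>set ps. permutation_matching (fst p)"
    and counts: "\<And>e. e \<in> EE \<Longrightarrow> sumv ps (Inl e) = k"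
  shows "length ps = 3 * k"
proof -
  have "\<forall>p\<in>set ps. \<exists>!a. a \<in> AA \<and> {h1, a} \<in> fst p"
  proof
    fix p assume "p \<in> set ps"
    with shape have "permutation_matching (fst p)" by blast
    then obtain b1 b2 b3 where b: "b1 \<in> AA" "b2 \<in> AA" "b3 \<in> AA" "fst p = match b1 b2 b3"
      unfolding permutation_matching_def by blast
    show "\<exists>!a. a \<in> AA \<and> {h1, a} \<in> fst p"
    proof (rule ex1I[of _ b1])
      show "b1 \<in> AA \<and> {h1, b1} \<in> fst p" using b by (simp add: match_def)
    next
      fix a assume "a \<in> AA \<and> {h1, a} \<in> fst p"
      then show "a = b1" using mem_match(1)[OF b(1-3)] b(4) by blast
    qed
  qed
  then have "length ps = (\<Sum>a\<in>AA. length (filter (\<lambda>p. {h1, a} \<in> fst p) ps))"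
    by (intro length_by_unique_class) simp_all
  also have "\<dots> = (\<Sum>a\<in>AA. k)"
  proof (rule sum.cong)
    fix a assume "a \<in> AA"
    then have "{h1, a} \<in> EE" unfolding bip_edges_def by blast
    then show "length (filter (\<lambda>p. {h1, a} \<in> fst p) ps) = k"
      using counts[of "{h1, a}"] by (simp add: sumv_Inl)
  qed simp
  also have "\<dots> = 3 * k" using A_distinct by simp
  finally show ?thesis .
qed

text \<open>If every edge is used \<open>k \<ge> 1\<close> times, then all of \<open>P1, P2, P3\<close> or all of \<open>Q1, Q2, Q3\<close> occur:
  the edges at \<open>h1\<close> give \<open>#Pi + #Qi = k\<close>, and the edges \<open>h2a3\<close>, \<open>h3a2\<close> give
  \<open>#P2 + #Q1 = #P3 + #Q1 = k\<close>, hence \<open>#P1 = #P2 = #P3\<close>.\<close>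

lemma one_factor_in_list:
  assumes k: "k \<ge> 1"
    and shape: "\<forall>p\<in>set ps. permutation_matching (fst p)"
    and counts: "\<And>e. e \<in> EE \<Longrightarrow> sumv ps (Inl e) = k"
  obtains qs where "set qs \<subseteq> set ps" and "length qs = 3"
    and "\<And>e. sumv qs (Inl e) = (if e \<in> EE then 1 else 0)"
proof -
  have cls: "\<forall>p\<in>set ps. {h1, a1} \<in> fst p \<longleftrightarrow> fst p = P1 \<or> fst p = Q1"
    "\<forall>p\<in>set ps. {h1, a2} \<in> fst p \<longleftrightarrow> fst p = P2 \<or> fst p = Q2"
    "\<forall>p\<in>set ps. {h1, a3} \<in> fst p \<longleftrightarrow> fst p = P3 \<or> fst p = Q3"
    "\<forall>p\<in>set ps. {h2, a3} \<in> fst p \<longleftrightarrow> fst p = P2 \<or> fst p = Q1"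
    "\<forall>p\<in>set ps. {h3, a2} \<in> fst p \<longleftrightarrow> fst p = P3 \<or> fst p = Q1"
    using shape by (simp_all add: edge_classes)
  have in_EE: "{h1, a1} \<in> EE" "{h1, a2} \<in> EE" "{h1, a3} \<in> EE" "{h2, a3} \<in> EE" "{h3, a2} \<in> EE"
    unfolding bip_edges_def by blast+
  have "mcount ps P1 + mcount ps Q1 = k" "mcount ps P2 + mcount ps Q2 = k"
    "mcount ps P3 + mcount ps Q3 = k" "mcount ps P2 + mcount ps Q1 = k"
    "mcount ps P3 + mcount ps Q1 = k"
    using sumv_Inl_two_matchings[OF cls(1)] sumv_Inl_two_matchings[OF cls(2)]
      sumv_Inl_two_matchings[OF cls(3)] sumv_Inl_two_matchings[OF cls(4)]
      sumv_Inl_two_matchings[OF cls(5)] matchings_differ counts in_EE by simp_all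
  then consider "0 < mcount ps P1" "0 < mcount ps P2" "0 < mcount ps P3"
    | "0 < mcount ps Q1" "0 < mcount ps Q2" "0 < mcount ps Q3"
    using k by linarith
  then show thesis
  proof cases
    case 1
    show thesis
    proof (rule pairs_with_matchings[OF 1])
      fix qs assume sub: "set qs \<subseteq> set ps" and len: "length qs = 3"
        and sums: "\<And>e. sumv qs (Inl e) = (if e \<in> P1 then 1 else 0) + (if e \<in> P2 then 1 else 0)
                            + (if e \<in> P3 then 1 else 0)"
      have "sumv qs (Inl e) = (if e \<in> EE then 1 else 0)" for e
        unfolding sums by (rule one_factorizations(1))
      with sub len show thesis by (rule that)
    qed
  next
    case 2
    show thesis
    proof (rule pairs_with_matchings[OF 2])
      fix qs assume sub: "set qs \<subseteq> set ps" and len: "length qs = 3"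
        and sums: "\<And>e. sumv qs (Inl e) = (if e \<in> Q1 then 1 else 0) + (if e \<in> Q2 then 1 else 0)
                            + (if e \<in> Q3 then 1 else 0)"
      have "sumv qs (Inl e) = (if e \<in> EE then 1 else 0)" for e
        unfolding sums by (rule one_factorizations(2))
      with sub len show thesis by (rule that)
    qed
  qed
qed

lemma K33_condition:
  assumes vN: "v \<in> Nbar (HH \<union> AA) (PM (HH \<union> AA))"
    and vK: "\<forall>e\<in>Kset (HH \<union> AA). v (Inl e) = (if e \<in> EE then 1 else 0)"
  shows "v \<in> Ncomb (PM (HH \<union> AA))"
proof -
  obtain k where vv: "v \<in> vecs (HH \<union> AA)" and k: "k \<ge> 1"
    and kN: "(\<lambda>x. k * v x) \<in> Ncomb (PM (HH \<union> AA))"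
    using vN unfolding Nbar_def by blast
  then obtain ps where valid: "\<forall>p\<in>set ps. valid (HH \<union> AA) p" and kps: "(\<lambda>x. k * v x) = sumv ps"
    unfolding Ncomb_PM_iff by blast
  have kv: "k * v x = sumv ps x" for x using fun_cong[OF kps, of x] by simp
  have v_edges: "v (Inl e) = (if e \<in> EE then 1 else 0)" for e
    using edge_coordinates[OF vv bip_edges_in_Kset[OF HA_disjoint] vK] .
  have counts: "sumv ps (Inl e) = (if e \<in> EE then k else 0)" for e
    using kv[of "Inl e"] v_edges[of e] by (cases "e \<in> EE") simp_all
  have pm: "perfect_matching (HH \<union> AA) (Bedges (snd p)) (fst p)" if "p \<in> set ps" for p
    using valid that unfolding valid_def by blast
  have in_EE: "fst p \<subseteq> EE" if "p \<in> set ps" for p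
  proof
    fix e assume "e \<in> fst p"
    then show "e \<in> EE" using sumv_Inl_zero[OF _ that, of e] counts[of e] by (auto split: if_split_asm)
  qed
  have shape: "\<forall>p\<in>set ps. permutation_matching (fst p)"
    using perfect_matching_is_permutation[OF in_EE pm] by blast
  have len: "length ps = 3 * k"
    using length_from_h1_edges[OF shape] counts by simp
  obtain qs where sub: "set qs \<subseteq> set ps" and len_qs: "length qs = 3"
    and factor: "\<And>e. sumv qs (Inl e) = (if e \<in> EE then 1 else 0)"
    using one_factor_in_list[OF k shape] counts by auto
  have card3: "card HH = 3" "card AA = 3" using distinct by simp_all
  have forced: "\<exists>e\<in>EE. \<forall>p\<in>set ps. snd p = d \<longrightarrow> e \<in> fst p"
    if d_in: "d \<in> insert {HH, AA} (Cset (HH \<union> AA))" and d_ne: "d \<noteq> {HH, AA}" for d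
  proof -
    obtain e where "e \<in> EE"
      and "\<And>q. perfect_matching (HH \<union> AA) (Bedges d) q \<Longrightarrow> q \<subseteq> EE \<Longrightarrow> e \<in> q"
      using K33_forced_edge[OF card3 HA_disjoint, of d] d_in d_ne by blast
    then show ?thesis using pm in_EE by blast
  qed
  have "v = sumv qs"
  proof (rule decomposition_by_factor_list[OF k kv v_edges _ _ _ forced sub factor])
    show "finite (insert {HH, AA} (Cset (HH \<union> AA)))" by (simp add: finite_Cset)
    show "\<forall>p\<in>set ps. snd p \<in> insert {HH, AA} (Cset (HH \<union> AA))"
      using valid unfolding valid_def by blast
    show "{HH, AA} \<in> insert {HH, AA} (Cset (HH \<union> AA))" by simp
    show "length ps = k * length qs" using len len_qs by simp
  qed
  then show ?thesis unfolding Ncomb_PM_iff using valid sub by blast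
qed

end

theorem mainTheorem11:
  fixes H A :: "'a set"
  assumes "card H = 3" and "card A = 3" and "H \<inter> A = {}"
  shows "B_factorizable (H \<union> A) {{u, v} | u v. u \<in> H \<and> v \<in> A}"
proof -
  obtain h1 h2 h3 where H: "H = {h1, h2, h3}" "distinct [h1, h2, h3]"
    using assms(1) unfolding card_3_iff by auto
  obtain a1 a2 a3 where A: "A = {a1, a2, a3}" "distinct [a1, a2, a3]"
    using assms(2) unfolding card_3_iff by auto
  interpret K33 h1 h2 h3 a1 a2 a3
    using H A assms(3) by unfold_locales auto
  have "regular_graph (H \<union> A) (bip_edges H A)"
    using assms by (intro regular_bip) (simp_all add: card_ge_0_finite)
  then have "B_factorizable (H \<union> A) (bip_edges H A)"
    unfolding B_factorizable_def using K33_condition by (simp add: H(1) A(1))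
  then show ?thesis by (simp add: bip_edges_def)
qed

end
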